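(* Let $(G,+)$ be an abelian group with identity $0$. Let $M=(E,\mathcal{I})$ and $N=(E',\mathcal{I}')$ be two transversal matroids over $G$ with partitions $\{E_i\}_{i\in[n]}$ of $E$ and $\{E'_i\}_{i\in[n]}$ of $E'$, respectively, such that $|E_i|=|E'_i|$ for all $i$. Assume there exists a total order $\preceq$ on $E\cup E'\cup(E+E')\cup\{0\}$ compatible with the group structure of $G$ such that: (1) $E$ and $E'$ are both positive; (2) for all $1\le i<j\le n$: $E_i\prec E_j$, $E'_i\prec E'_j$, and $|E_i|>|E_j|$; (3) $\max E\preceq \max E'$. Then $M$ is matched to $N$.
   Context: Given a partition of a finite set $E$ into disjoint sets $E_1,\dots,E_l$, the transversal matroid on $E$ has as independent sets those $X\subseteq E$ with $|X\cap E_i|\le 1$ for all $i$. A matroid over $G$ is a matroid whose finite ground set is a subset of $G$. $E+E'=\{a+b: a\in E, b\in E'\}$. A total order $\preceq$ on $A\subseteq G$ is compatible with the group structure if for all $a,b,c\in A$, $a\preceq b$ implies $a+c\preceq b+c$. An element $x$ is positive if $0\prec x$; a set is positive if all its elements are positive. For sets $A,B$, $A\prec B$ means $a\prec b$ for all $a\in A$, $b\in B$ (where $\prec$ means $\preceq$ and $\ne$). For matroids $M,N$ over $G$ with $r(M)=r(N)=n>0$ and bases $\mathcal{M}=\{a_1,\dots,a_n\}$ of $M$ and $\mathcal{N}=\{b_1,\dots,b_n\}$ of $N$, $\mathcal{M}$ is matched to $\mathcal{N}$ if there is a permutation $\pi\in S_n$ with $a_i+b_{\pi(i)}\notin E(M)$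 for all $i$. $M$ is matched to $N$ if for every basis $\mathcal{M}$ of $M$ there exists a basis $\mathcal{N}$ of $N$ such that $\mathcal{M}$ is matched to $\mathcal{N}$. *)

theory Defs
  imports Main
begin

definition is_partition :: "'a set \<Rightarrow> nat \<Rightarrow> (nat \<Rightarrow> 'a set) \<Rightarrow> bool" where
  "is_partition E n P \<longleftrightarrow> finite E \<and> E = (\<Union>i\<in>{1..n}. P i) \<and>
     (\<forall>i\<in>{1..n}. P i \<noteq> {}) \<and>
     (\<forall>i\<in>{1..n}. \<forall>j\<in>{1..n}. i \<noteq> j \<longrightarrow> P i \<inter> P j = {})"

definition trans_indep :: "'a set \<Rightarrow> nat \<Rightarrow> (nat \<Rightarrow> 'a set) \<Rightarrow> 'a set \<Rightarrow> bool" where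
  "trans_indep E n P X \<longleftrightarrow> X \<subseteq> E \<and> (\<forall>i\<in>{1..n}. card (X \<inter> P i) \<le> 1)"

definition trans_basis :: "'a set \<Rightarrow> nat \<Rightarrow> (nat \<Rightarrow> 'a set) \<Rightarrow> 'a set \<Rightarrow> bool" where
  "trans_basis E n P B \<longleftrightarrow> trans_indep E n P B \<and>
     (\<forall>X. trans_indep E n P X \<and> B \<subseteq> X \<longrightarrow> X = B)"

definition basis_matched :: "'a::plus set \<Rightarrow> 'a set \<Rightarrow> 'a set \<Rightarrow> bool" where
  "basis_matched E B B' \<longleftrightarrow> (\<exists>f. bij_betw f B B' \<and> (\<forall>a\<in>B. a + f a \<notin> E))"

definition trans_matched ::
  "'a::plus set \<Rightarrow> nat \<Rightarrow> (nat \<Rightarrow> 'a set) \<Rightarrow> 'a set \<Rightarrow> nat \<Rightarrow> (nat \<Rightarrow> 'a set) \<Rightarrow> bool" where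
  "trans_matched E n P E' m P' \<longleftrightarrow>
     (\<forall>B. trans_basis E n P B \<longrightarrow> (\<exists>B'. trans_basis E' m P' B' \<and> basis_matched E B B'))"

definition sumset :: "'a::plus set \<Rightarrow> 'a set \<Rightarrow> 'a set" where
  "sumset A B = {a + b | a b. a \<in> A \<and> b \<in> B}"

definition order_compatible :: "'a::plus set \<Rightarrow> ('a \<times> 'a) set \<Rightarrow> bool" where
  "order_compatible A r \<longleftrightarrow> (\<forall>a\<in>A. \<forall>b\<in>A. \<forall>c\<in>A.
     (a, b) \<in> r \<and> a + c \<in> A \<and> b + c \<in> A \<longrightarrow> (a + c, b + c) \<in> r)"

definition strict_lt :: "('a \<times> 'a) set \<Rightarrow> 'a \<Rightarrow> 'a \<Rightarrow> bool" where
  "strict_lt r a b \<longleftrightarrow> (a, b) \<in> r \<and> a \<noteq> b"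

definition set_positive :: "('a \<times> 'a) set \<Rightarrow> 'a::zero set \<Rightarrow> bool" where
  "set_positive r A \<longleftrightarrow> (\<forall>x\<in>A. strict_lt r 0 x)"

definition set_less :: "('a \<times> 'a) set \<Rightarrow> 'a set \<Rightarrow> 'a set \<Rightarrow> bool" where
  "set_less r A B \<longleftrightarrow> (\<forall>a\<in>A. \<forall>b\<in>B. strict_lt r a b)"

definition ord_max :: "('a \<times> 'a) set \<Rightarrow> 'a set \<Rightarrow> 'a" where
  "ord_max r A = (THE m. m \<in> A \<and> (\<forall>x\<in>A. (x, m) \<in> r))"

end

theory Submission
  imports Defs
begin

(* A basis of the transversal matroid M picks one element a_k from each block E_k.
   Suppose that a_k + b lies in E for every b in some n + 1 - k blocks of N.  Since E' is
   positive and the order is compatible with addition, translation by a_k maps these blocks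
   injectively to elements of E strictly above a_k, i.e. into (E_k u ... u E_n) - {a_k}; but
   as the block sizes decrease, any n + 1 - k blocks have at least |E_k| + ... + |E_n|
   elements.  So a_k has a partner outside E in any n + 1 - k blocks of N, and assigning
   blocks greedily to a_n, a_(n-1), ..., a_1 yields a permutation of the blocks; one partner
   from each block forms a basis of N matched to the given one. *)

lemma partition_block_subset:
  "is_partition E n P \<Longrightarrow> i \<in> {1..n} \<Longrightarrow> P i \<subseteq> E"
  unfolding is_partition_def by blast

lemma partition_block_finite:
  "is_partition E n P \<Longrightarrow> i \<in> {1..n} \<Longrightarrow> finite (P i)"
  using partition_block_subset finite_subset unfolding is_partition_def by metis

lemma partition_block_unique:
  "is_partition E n P \<Longrightarrow> i \<in> {1..n} \<Longrightarrow> j \<in> {1..n} \<Longrightarrow> x \<in> P i \<Longrightarrow> x \<in> P j \<Longrightarrow> i = j"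
  unfolding is_partition_def by blast

lemma partition_card_UN:
  assumes "is_partition E n P" "K \<subseteq> {1..n}"
  shows "card (\<Union>j\<in>K. P j) = (\<Sum>j\<in>K. card (P j))"
proof (rule card_UN_disjoint)
  show "finite K"
    using assms(2) finite_subset by blast
  show "\<forall>j\<in>K. finite (P j)"
    using assms partition_block_finite by blast
  show "\<forall>i\<in>K. \<forall>j\<in>K. i \<noteq> j \<longrightarrow> P i \<inter> P j = {}"
    using assms(2) partition_block_unique[OF assms(1)] by blast
qed

lemma trans_basis_iff:
  assumes part: "is_partition E n P"
  shows "trans_basis E n P B \<longleftrightarrow> B \<subseteq> E \<and> (\<forall>i\<in>{1..n}. card (B \<inter> P i) = 1)"
proof
  assume basis: "trans_basis E n P B"
  then have BE: "B \<subseteq> E" and le1: "\<forall>i\<in>{1..n}. card (B \<inter> P i) \<le> 1"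
    unfolding trans_basis_def trans_indep_def by auto
  have "card (B \<inter> P i) = 1" if i: "i \<in> {1..n}" for i
  proof (rule ccontr)
    assume "card (B \<inter> P i) \<noteq> 1"
    moreover have "finite (B \<inter> P i)"
      using part i partition_block_finite by blast
    ultimately have empty: "B \<inter> P i = {}"
      using le1 i by (metis One_nat_def card_0_eq le_SucE le_zero_eq)
    obtain p where p: "p \<in> P i"
      using part i unfolding is_partition_def by blast
    have "trans_indep E n P (insert p B)"
      unfolding trans_indep_def
    proof (intro conjI ballI)
      show "insert p B \<subseteq> E"
        using BE p i part partition_block_subset by blast
      fix j assume j: "j \<in> {1..n}"
      show "card (insert p B \<inter> P j) \<le> 1"
      proof (cases "j = i")
        case True
        then show ?thesis using empty p by (simp add: Int_insert_left)
      next
        case False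
        then have "p \<notin> P j" using part i j p partition_block_unique by metis
        then show ?thesis using le1 j by simp
      qed
    qed
    then have "insert p B = B"
      using basis unfolding trans_basis_def by blast
    then show False using empty p by blast
  qed
  with BE show "B \<subseteq> E \<and> (\<forall>i\<in>{1..n}. card (B \<inter> P i) = 1)" by blast
next
  assume "B \<subseteq> E \<and> (\<forall>i\<in>{1..n}. card (B \<inter> P i) = 1)"
  then have BE: "B \<subseteq> E" and one: "\<And>i. i \<in> {1..n} \<Longrightarrow> card (B \<inter> P i) = 1" by auto
  show "trans_basis E n P B"
    unfolding trans_basis_def
  proof (intro conjI allI impI)
    show "trans_indep E n P B"
      using BE one unfolding trans_indep_def by simp
    fix X assume X: "trans_indep E n P X \<and> B \<subseteq> X"
    show "X = B"
    proof
      show "X \<subseteq> B"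
      proof
        fix x assume x: "x \<in> X"
        then obtain i where i: "i \<in> {1..n}" "x \<in> P i"
          using X part unfolding trans_indep_def is_partition_def by blast
        obtain b where b: "B \<inter> P i = {b}"
          using one[OF i(1)] card_1_singletonE by blast
        have "finite (X \<inter> P i)"
          using i part partition_block_finite by blast
        moreover have "card (X \<inter> P i) \<le> 1"
          using X i unfolding trans_indep_def by blast
        moreover have "x \<in> X \<inter> P i" "b \<in> X \<inter> P i"
          using x i X b by auto
        ultimately have "x = b"
          using card_le_Suc0_iff_eq by (metis One_nat_def)
        then show "x \<in> B" using b by blast
      qed
    qed (use X in blast)
  qed
qed

lemma
  assumes part: "is_partition E n P" and \<tau>: "bij_betw \<tau> {1..n} {1..n}"
    and g: "\<forall>i\<in>{1..n}. g i \<in> P (\<tau> i)"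
  shows inj_on_block_choice: "inj_on g {1..n}"
    and trans_basis_block_choice: "trans_basis E n P (g ` {1..n})"
proof -
  have same_block: "i = i'" if "i \<in> {1..n}" "i' \<in> {1..n}" "g i' \<in> P (\<tau> i)" for i i'
  proof -
    have "\<tau> i \<in> {1..n}" "\<tau> i' \<in> {1..n}"
      using that \<tau> bij_betwE by blast+
    then have "\<tau> i' = \<tau> i"
      using partition_block_unique[OF part] g that by blast
    then show "i = i'"
      using that \<tau> bij_betw_imp_inj_on inj_onD by metis
  qed
  then show "inj_on g {1..n}"
    using g by (metis inj_onI)
  have "card (g ` {1..n} \<inter> P j) = 1" if j: "j \<in> {1..n}" for j
  proof -
    obtain i where i: "i \<in> {1..n}" "j = \<tau> i"
      using \<tau> j by (metis bij_betw_imp_surj_on imageE)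
    have "g ` {1..n} \<inter> P j = {g i}"
      using same_block i g by blast
    then show ?thesis by simp
  qed
  moreover have "g ` {1..n} \<subseteq> E"
    using g \<tau> part partition_block_subset bij_betwE by blast
  ultimately show "trans_basis E n P (g ` {1..n})"
    using trans_basis_iff[OF part] by blast
qed

lemma trans_basis_representatives:
  assumes part: "is_partition E n P" and basis: "trans_basis E n P B"
  obtains a where "\<forall>i\<in>{1..n}. a i \<in> P i" and "B = a ` {1..n}"
proof -
  have "\<forall>i\<in>{1..n}. \<exists>x. B \<inter> P i = {x}"
    using basis by (simp add: trans_basis_iff[OF part] card_1_singleton_iff)
  then obtain a where a: "\<forall>i\<in>{1..n}. B \<inter> P i = {a i}"
    by metis
  have "B \<subseteq> a ` {1..n}"
  proof
    fix x assume "x \<in> B"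
    moreover obtain i where "i \<in> {1..n}" "x \<in> P i"
      using \<open>x \<in> B\<close> basis part unfolding trans_basis_def trans_indep_def is_partition_def
      by blast
    ultimately show "x \<in> a ` {1..n}"
      using a by blast
  qed
  moreover have "a ` {1..n} \<subseteq> B"
    using a by blast
  ultimately show thesis
    using that a by blast
qed

lemma trans_matched_if_permutation:
  fixes E E' :: "'a::plus set"
  assumes part: "is_partition E n P" and part': "is_partition E' n P'"
    and perm: "\<And>a. \<forall>i\<in>{1..n}. a i \<in> P i \<Longrightarrow>
      \<exists>\<tau>. bij_betw \<tau> {1..n} {1..n} \<and> (\<forall>i\<in>{1..n}. \<exists>b\<in>P' (\<tau> i). a i + b \<notin> E)"
  shows "trans_matched E n P E' n P'"
  unfolding trans_matched_def
proof (intro allI impI)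
  fix B assume "trans_basis E n P B"
  then obtain a where a: "\<forall>i\<in>{1..n}. a i \<in> P i" and B: "B = a ` {1..n}"
    using trans_basis_representatives[OF part] by blast
  have inj_a: "inj_on a {1..n}"
    using inj_on_block_choice[OF part bij_betw_id] a by simp
  obtain \<tau> where \<tau>: "bij_betw \<tau> {1..n} {1..n}"
    and "\<forall>i\<in>{1..n}. \<exists>b\<in>P' (\<tau> i). a i + b \<notin> E"
    using perm[OF a] by blast
  then obtain g where g: "\<forall>i\<in>{1..n}. g i \<in> P' (\<tau> i)" and sum: "\<forall>i\<in>{1..n}. a i + g i \<notin> E"
    by metis
  define f where "f = g \<circ> inv_into {1..n} a"
  have "bij_betw f B (g ` {1..n})"
    unfolding f_def B using inj_a inj_on_block_choice[OF part' \<tau> g]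
    by (metis bij_betw_imageI bij_betw_inv_into bij_betw_trans)
  moreover have "\<forall>x\<in>B. x + f x \<notin> E"
    using sum inj_a unfolding B f_def by simp
  ultimately have "basis_matched E B (g ` {1..n})"
    unfolding basis_matched_def by blast
  then show "\<exists>B'. trans_basis E' n P' B' \<and> basis_matched E B B'"
    using trans_basis_block_choice[OF part' \<tau> g] by blast
qed

lemma greedy_permutation:
  assumes J: "finite J" "card J = n"
    and choice: "\<And>k K. k \<in> {1..n} \<Longrightarrow> K \<subseteq> J \<Longrightarrow> card K = n + 1 - k \<Longrightarrow> \<exists>j\<in>K. R k j"
  obtains \<tau> where "bij_betw \<tau> {1..n} J" and "\<forall>i\<in>{1..n}. R i (\<tau> i)"
proof -
  have "\<exists>\<tau>. bij_betw \<tau> {n+1-m..n} K \<and> (\<forall>i\<in>{n+1-m..n}. R i (\<tau> i))"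
    if "m \<le> n" "K \<subseteq> J" "card K = m" for m K
    using that
  proof (induction m arbitrary: K)
    case 0
    then have "K = {}"
      using J(1) finite_subset by fastforce
    then show ?case by (simp add: bij_betw_def)
  next
    case (Suc m)
    define k where "k = n - m"
    have k: "k \<in> {1..n}" "card K = n + 1 - k"
      using Suc.prems unfolding k_def by auto
    obtain j where j: "j \<in> K" "R k j"
      using choice[OF k(1) Suc.prems(2) k(2)] by blast
    have "card (K - {j}) = m"
      using Suc.prems(3) j(1) by simp
    then obtain \<tau> where \<tau>: "bij_betw \<tau> {n+1-m..n} (K - {j})"
      and R\<tau>: "\<forall>i\<in>{n+1-m..n}. R i (\<tau> i)"
      using Suc.IH Suc.prems(1,2) by (metis Diff_subset Suc_leD subset_trans)
    have dom: "{n+1-Suc m..n} = insert k {n+1-m..n}" "k \<notin> {n+1-m..n}"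
      using Suc.prems(1) unfolding k_def by auto
    have "bij_betw (\<tau>(k := j)) {n+1-m..n} (K - {j})"
      using \<tau> dom(2) by (metis bij_betw_cong fun_upd_other)
    moreover have "bij_betw (\<tau>(k := j)) {k} {j}"
      by simp
    ultimately have "bij_betw (\<tau>(k := j)) ({n+1-m..n} \<union> {k}) ((K - {j}) \<union> {j})"
      by (rule bij_betw_combine) simp
    then have "bij_betw (\<tau>(k := j)) {n+1-Suc m..n} K"
      using j(1) dom(1) by (simp add: insert_absorb)
    moreover have "\<forall>i\<in>{n+1-Suc m..n}. R i ((\<tau>(k := j)) i)"
      using R\<tau> j(2) unfolding dom(1) by auto
    ultimately show ?case by blast
  qed
  from this[of n J] show thesis
    using J that by auto
qed

lemma antimono_on_sum_tail_le:
  fixes c :: "nat \<Rightarrow> 'b::{semiring_1, ordered_comm_monoid_add}"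
  assumes c: "antimono_on {1..n} c" and K: "K \<subseteq> {1..n}" "card K = card {k..n}"
    and k: "k \<in> {1..n}"
  shows "sum c {k..n} \<le> sum c K"
proof -
  define L where "L = K - {k..n}"
  define M where "M = K \<inter> {k..n}"
  define R where "R = {k..n} - K"
  have fin: "finite L" "finite M" "finite R"
    using K(1) finite_subset unfolding L_def M_def R_def by auto
  have K_split: "sum c K = sum c M + sum c L"
    using fin sum.union_disjoint[of M L c] unfolding L_def M_def
    by (metis Int_Diff_Un Int_Diff_disjoint)
  have tail_split: "sum c {k..n} = sum c M + sum c R"
    using fin sum.union_disjoint[of M R c] unfolding M_def R_def
    by (metis Int_Diff_Un Int_Diff_disjoint inf_commute)
  have "card K = card M + card L" "card {k..n} = card M + card R"
    using fin unfolding L_def M_def R_def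
    by (metis Int_Diff_Un Int_Diff_disjoint card_Un_disjoint inf_commute)+
  then have card_LR: "card L = card R"
    using K(2) by simp
  have "c j \<le> c k" if "j \<in> R" for j
    using that k c unfolding R_def by (auto simp: monotone_on_def)
  then have "sum c R \<le> of_nat (card R) * c k"
    by (rule sum_bounded_above)
  also have "\<dots> = of_nat (card L) * c k"
    using card_LR by simp
  also have "\<dots> \<le> sum c L"
  proof (rule sum_bounded_below)
    fix j assume "j \<in> L"
    then have "j \<in> {1..n}" "j \<le> k"
      using K(1) k unfolding L_def by auto
    then show "c k \<le> c j"
      using k c by (auto simp: monotone_on_def)
  qed
  finally show ?thesis
    using K_split tail_split by (simp add: add_left_mono)
qed

lemma strict_lt_add_positive:
  fixes a b :: "'a::cancel_comm_monoid_add"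
  assumes compat: "order_compatible A r" and A: "0 \<in> A" "a \<in> A" "b \<in> A" "a + b \<in> A"
    and b: "strict_lt r 0 b"
  shows "strict_lt r a (a + b)"
proof -
  have "0 + a \<in> A" "b + a \<in> A"
    using A by (simp_all add: add.commute)
  then have "(0 + a, b + a) \<in> r"
    using compat A b unfolding order_compatible_def strict_lt_def by blast
  then show ?thesis
    using b unfolding strict_lt_def by (simp add: add.commute)
qed

lemma card_strict_upper_set_less:
  assumes part: "is_partition E n P" and "antisym r"
    and blocks_less: "\<forall>i\<in>{1..n}. \<forall>j\<in>{1..n}. i < j \<longrightarrow> set_less r (P i) (P j)"
    and k: "k \<in> {1..n}" and a: "a \<in> P k"
  shows "card {e \<in> E. strict_lt r a e} < (\<Sum>j\<in>{k..n}. card (P j))"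
proof -
  define V where "V = (\<Union>j\<in>{k..n}. P j)"
  have "{e \<in> E. strict_lt r a e} \<subseteq> V - {a}"
  proof
    fix e assume e: "e \<in> {e \<in> E. strict_lt r a e}"
    then obtain j where j: "j \<in> {1..n}" "e \<in> P j"
      using part unfolding is_partition_def by blast
    have "\<not> j < k"
    proof
      assume "j < k"
      then have "strict_lt r e a"
        using blocks_less j k a unfolding set_less_def by blast
      then show False
        using e \<open>antisym r\<close> unfolding strict_lt_def antisym_def by blast
    qed
    then show "e \<in> V - {a}"
      using e j unfolding V_def strict_lt_def by auto
  qed
  moreover have "finite V"
    unfolding V_def using k by (intro finite_UN_I) (auto intro: partition_block_finite[OF part])
  ultimately have "card {e \<in> E. strict_lt r a e} \<le> card (V - {a})"
    by (intro card_mono) auto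
  also have "\<dots> < card V"
    using \<open>finite V\<close> a k unfolding V_def by (intro card_Diff1_less) auto
  also have "\<dots> = (\<Sum>j\<in>{k..n}. card (P j))"
    unfolding V_def using k by (intro partition_card_UN[OF part]) auto
  finally show ?thesis .
qed

lemma exists_sum_notin:
  fixes E E' :: "'a::ab_group_add set"
  assumes part: "is_partition E n P" and part': "is_partition E' n P'"
    and card_eq: "\<forall>i\<in>{1..n}. card (P i) = card (P' i)"
    and "antisym r" and compat: "order_compatible (E \<union> E' \<union> sumset E E' \<union> {0}) r"
    and pos': "set_positive r E'"
    and blocks_less: "\<forall>i\<in>{1..n}. \<forall>j\<in>{1..n}. i < j \<longrightarrow> set_less r (P i) (P j)"
    and card_antimono: "antimono_on {1..n} (\<lambda>i. card (P i))"
    and k: "k \<in> {1..n}" and a: "a \<in> P k"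
    and K: "K \<subseteq> {1..n}" "card K = n + 1 - k"
  shows "\<exists>j\<in>K. \<exists>b\<in>P' j. a + b \<notin> E"
proof (rule ccontr)
  assume "\<not> ?thesis"
  then have sum_in_E: "a + b \<in> E" if "j \<in> K" "b \<in> P' j" for j b
    using that by blast
  define W where "W = (\<Union>j\<in>K. P' j)"
  have translate: "(+) a ` W \<subseteq> {e \<in> E. strict_lt r a e}"
  proof
    fix x assume "x \<in> (+) a ` W"
    then obtain j b where j: "j \<in> K" and b: "b \<in> P' j" and x: "x = a + b"
      unfolding W_def by blast
    have "b \<in> E'"
      using j b K part' partition_block_subset by blast
    moreover have "a \<in> E"
      using a k part partition_block_subset by blast
    ultimately have "strict_lt r a (a + b)"
      using strict_lt_add_positive[OF compat] pos' sum_in_E[OF j b]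
      unfolding set_positive_def sumset_def by blast
    then show "x \<in> {e \<in> E. strict_lt r a e}"
      using sum_in_E[OF j b] x by blast
  qed
  have "card W \<le> card {e \<in> E. strict_lt r a e}"
  proof (rule card_inj_on_le[OF _ translate])
    have "finite E"
      using part unfolding is_partition_def by blast
    then show "finite {e \<in> E. strict_lt r a e}"
      by simp
  qed simp
  also have "\<dots> < (\<Sum>j\<in>{k..n}. card (P j))"
    using card_strict_upper_set_less[OF part \<open>antisym r\<close> blocks_less k a] .
  also have "\<dots> \<le> (\<Sum>j\<in>K. card (P j))"
    using antimono_on_sum_tail_le[OF card_antimono K(1) _ k] K(2) by simp
  also have "\<dots> = card W"
    using partition_card_UN[OF part' K(1)] card_eq K(1) unfolding W_def by (simp add: subset_iff)
  finally show False by simp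
qed

theorem theorem2p15:
  fixes E E' :: "'a::ab_group_add set"
    and P P' :: "nat \<Rightarrow> 'a set"
    and n :: nat
    and r :: "('a \<times> 'a) set"
  assumes n_pos: "n > 0"
    and partE: "is_partition E n P"
    and partE': "is_partition E' n P'"
    and card_eq: "\<forall>i\<in>{1..n}. card (P i) = card (P' i)"
    and lin: "linear_order_on (E \<union> E' \<union> sumset E E' \<union> {0}) r"
    and compat: "order_compatible (E \<union> E' \<union> sumset E E' \<union> {0}) r"
    and pos: "set_positive r E" "set_positive r E'"
    and ordered: "\<forall>i\<in>{1..n}. \<forall>j\<in>{1..n}. i < j \<longrightarrow>
        set_less r (P i) (P j) \<and> set_less r (P' i) (P' j) \<and> card (P i) > card (P j)"
    and maxs: "(ord_max r E, ord_max r E') \<in> r"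
  shows "trans_matched E n P E' n P'"
proof (rule trans_matched_if_permutation[OF partE partE'])
  have "antisym r"
    using lin unfolding linear_order_on_def partial_order_on_def by blast
  have blocks_less: "\<forall>i\<in>{1..n}. \<forall>j\<in>{1..n}. i < j \<longrightarrow> set_less r (P i) (P j)"
    using ordered by blast
  have card_antimono: "antimono_on {1..n} (\<lambda>i. card (P i))"
    using ordered unfolding monotone_on_def by (metis le_less order_refl)
  fix a assume a: "\<forall>i\<in>{1..n}. a i \<in> P i"
  obtain \<tau> where "bij_betw \<tau> {1..n} {1..n}" "\<forall>i\<in>{1..n}. \<exists>b\<in>P' (\<tau> i). a i + b \<notin> E"
  proof (rule greedy_permutation[of "{1..n}" n])
    fix k K assume "k \<in> {1..n}" "K \<subseteq> {1..n}" "card K = n + 1 - k"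
    then show "\<exists>j\<in>K. \<exists>b\<in>P' j. a k + b \<notin> E"
      using exists_sum_notin[OF partE partE' card_eq \<open>antisym r\<close> compat pos(2) blocks_less
          card_antimono] a by blast
  qed auto
  then show "\<exists>\<tau>. bij_betw \<tau> {1..n} {1..n} \<and> (\<forall>i\<in>{1..n}. \<exists>b\<in>P' (\<tau> i). a i + b \<notin> E)"
    by blast
qed

end
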